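(* Let $A$ be a Noetherian ring, $\mathcal{R}$ a standard graded ring with $\mathcal{R}_0=A$, $X\in\operatorname{^*Mod}_f(\mathcal{R})$, and set $Y=X/H^0_{\mathcal{R}_+}(X)$. Then $\operatorname{Ass}_A X=\operatorname{Ass}_A Y\cup\operatorname{Ass}_A H^0_{\mathcal{R}_+}(X)$. Moreover, if $P\in\operatorname{Ass}_A Y_s$ for some $s$, then $P\in\operatorname{Ass}_A X_{s+r}$ for some $r\ge1$.
   Context: A standard graded ring $\mathcal{R}=\bigoplus_{n\ge0}\mathcal{R}_n$ with $\mathcal{R}_0=A$ is a Noetherian $\mathbb{N}$-graded commutative ring generated as an $A$-algebra by finitely many elements of $\mathcal{R}_1$; $\mathcal{R}_+=\bigoplus_{n\ge1}\mathcal{R}_n$. $\operatorname{^*Mod}_f(\mathcal{R})$ is the full subcategory of graded $\mathcal{R}$-modules $X=\bigoplus_{n\in\mathbb{Z}}X_n$ with every $X_n$ a finitely generated $A$-module and $X_n=0$ for $n\ll0$. $H^0_{\mathcal{R}_+}(X)=\{x\in X:\mathcal{R}_+^k x=0\text{ for some }k\}$. For a graded module $X$, $\operatorname{Ass}_A X$ denotes the associated primes of $X$ regarded as an $A$-module (equivalently $\bigcup_n\operatorname{Ass}_A X_n$). *)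

theory Defs
  imports Complex_Main
begin

definition ideal_in :: "'a::comm_ring_1 set \<Rightarrow> 'a set \<Rightarrow> bool" where
  "ideal_in S I \<longleftrightarrow> I \<subseteq> S \<and> 0 \<in> I \<and> (\<forall>x\<in>I. \<forall>y\<in>I. x + y \<in> I) \<and> (\<forall>x\<in>I. - x \<in> I)
     \<and> (\<forall>s\<in>S. \<forall>x\<in>I. s * x \<in> I)"

definition prime_ideal_in :: "'a::comm_ring_1 set \<Rightarrow> 'a set \<Rightarrow> bool" where
  "prime_ideal_in S P \<longleftrightarrow> ideal_in S P \<and> P \<noteq> S
     \<and> (\<forall>a\<in>S. \<forall>b\<in>S. a * b \<in> P \<longrightarrow> a \<in> P \<or> b \<in> P)"

definition lin_comb :: "'a::comm_ring_1 set \<Rightarrow> 'a set \<Rightarrow> 'a set" where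
  "lin_comb S F = {\<Sum>f\<in>F. c f * f | c. \<forall>f\<in>F. c f \<in> S}"

definition noetherian_in :: "'a::comm_ring_1 set \<Rightarrow> bool" where
  "noetherian_in S \<longleftrightarrow> (\<forall>I. ideal_in S I \<longrightarrow> (\<exists>F. finite F \<and> F \<subseteq> I \<and> I = lin_comb S F))"

definition ideal_gen :: "'a::comm_ring_1 set \<Rightarrow> 'a set" where
  "ideal_gen T = {\<Sum>t\<in>F. c t * t | F c. finite F \<and> F \<subseteq> T}"

definition ideal_prod :: "'a::comm_ring_1 set \<Rightarrow> 'a set \<Rightarrow> 'a set" where
  "ideal_prod I J = ideal_gen {i * j | i j. i \<in> I \<and> j \<in> J}"

fun ideal_pow :: "'a::comm_ring_1 set \<Rightarrow> nat \<Rightarrow> 'a set" where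
  "ideal_pow I 0 = UNIV"
| "ideal_pow I (Suc k) = ideal_prod I (ideal_pow I k)"

text \<open>Associated primes over the subring A of the quotient module M/N, where N is a submodule
  and M a subset of the ambient module (elements of M represent the classes in (M+N)/N).
  Ass_A M (with M a submodule) is \<open>ass_quot smult A M {0}\<close>.\<close>
definition ass_quot :: "('a::comm_ring_1 \<Rightarrow> 'm::ab_group_add \<Rightarrow> 'm) \<Rightarrow> 'a set \<Rightarrow> 'm set \<Rightarrow> 'm set \<Rightarrow> 'a set set" where
  "ass_quot smult A M N = {P. prime_ideal_in A P \<and> (\<exists>x\<in>M. P = {a\<in>A. smult a x \<in> N})}"

inductive_set alg_gen :: "'a::comm_ring_1 set \<Rightarrow> 'a set \<Rightarrow> 'a set" for A S where
  base: "a \<in> A \<Longrightarrow> a \<in> alg_gen A S"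
| gen: "s \<in> S \<Longrightarrow> s \<in> alg_gen A S"
| add: "x \<in> alg_gen A S \<Longrightarrow> y \<in> alg_gen A S \<Longrightarrow> x + y \<in> alg_gen A S"
| neg: "x \<in> alg_gen A S \<Longrightarrow> - x \<in> alg_gen A S"
| mult: "x \<in> alg_gen A S \<Longrightarrow> y \<in> alg_gen A S \<Longrightarrow> x * y \<in> alg_gen A S"

definition add_subgroup :: "'b::ab_group_add set \<Rightarrow> bool" where
  "add_subgroup H \<longleftrightarrow> 0 \<in> H \<and> (\<forall>x\<in>H. \<forall>y\<in>H. x + y \<in> H) \<and> (\<forall>x\<in>H. - x \<in> H)"

definition direct_sum_decomp :: "('i \<Rightarrow> 'b::ab_group_add set) \<Rightarrow> bool" where
  "direct_sum_decomp D \<longleftrightarrow>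
     (\<forall>x. \<exists>F c. finite F \<and> (\<forall>n\<in>F. c n \<in> D n) \<and> x = (\<Sum>n\<in>F. c n))
   \<and> (\<forall>F c. finite F \<and> (\<forall>n\<in>F. c n \<in> D n) \<and> (\<Sum>n\<in>F. c n) = 0 \<longrightarrow> (\<forall>n\<in>F. c n = 0))"

definition graded_ring :: "(nat \<Rightarrow> 'a::comm_ring_1 set) \<Rightarrow> bool" where
  "graded_ring G \<longleftrightarrow> (\<forall>n. add_subgroup (G n)) \<and> 1 \<in> G 0
     \<and> (\<forall>m n. \<forall>x\<in>G m. \<forall>y\<in>G n. x * y \<in> G (m + n)) \<and> direct_sum_decomp G"

definition standard_graded :: "(nat \<Rightarrow> 'a::comm_ring_1 set) \<Rightarrow> bool" where
  "standard_graded G \<longleftrightarrow> graded_ring G \<and> noetherian_in (UNIV :: 'a set)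
     \<and> (\<exists>S. finite S \<and> S \<subseteq> G 1 \<and> alg_gen (G 0) S = UNIV)"

definition irrelevant_ideal :: "(nat \<Rightarrow> 'a::comm_ring_1 set) \<Rightarrow> 'a set" where
  "irrelevant_ideal G = ideal_gen (\<Union>n\<in>{1..}. G n)"

definition fin_gen_over :: "('a::comm_ring_1 \<Rightarrow> 'm::ab_group_add \<Rightarrow> 'm) \<Rightarrow> 'a set \<Rightarrow> 'm set \<Rightarrow> bool" where
  "fin_gen_over smult A M \<longleftrightarrow>
     (\<exists>F. finite F \<and> F \<subseteq> M \<and> M = {\<Sum>f\<in>F. smult (c f) f | c. \<forall>f\<in>F. c f \<in> A})"

definition graded_module :: "(nat \<Rightarrow> 'a::comm_ring_1 set) \<Rightarrow> ('a \<Rightarrow> 'm::ab_group_add \<Rightarrow> 'm)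
     \<Rightarrow> (int \<Rightarrow> 'm set) \<Rightarrow> bool" where
  "graded_module G smult X \<longleftrightarrow> module smult \<and> (\<forall>n. add_subgroup (X n))
     \<and> (\<forall>m n. \<forall>r\<in>G m. \<forall>x\<in>X n. smult r x \<in> X (int m + n)) \<and> direct_sum_decomp X"

definition in_starMod_f :: "(nat \<Rightarrow> 'a::comm_ring_1 set) \<Rightarrow> ('a \<Rightarrow> 'm::ab_group_add \<Rightarrow> 'm)
     \<Rightarrow> (int \<Rightarrow> 'm set) \<Rightarrow> bool" where
  "in_starMod_f G smult X \<longleftrightarrow> graded_module G smult X
     \<and> (\<forall>n. fin_gen_over smult (G 0) (X n)) \<and> (\<exists>n0. \<forall>n<n0. X n = {0})"

definition H0 :: "(nat \<Rightarrow> 'a::comm_ring_1 set) \<Rightarrow> ('a \<Rightarrow> 'm::ab_group_add \<Rightarrow> 'm) \<Rightarrow> 'm set" where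
  "H0 G smult = {x. \<exists>k. \<forall>r\<in>ideal_pow (irrelevant_ideal G) k. smult r x = 0}"

end

theory Submission
  imports Defs
begin

text \<open>The irrelevant ideal \<open>R\<^sub>+\<close> is generated by a finite set \<open>T\<close> of homogeneous elements of
  positive degree, so \<open>R\<^sub>+\<^sup>k\<close> is generated by the monomials of length \<open>k\<close> in \<open>T\<close>. Let
  \<open>P = ann\<^sub>A (y + H\<^sup>0(X))\<close> be prime. As \<open>P\<close> is finitely generated, a single power \<open>R\<^sub>+\<^sup>k\<close>
  kills \<open>P y\<close>, so \<open>P\<close> is the intersection of the finitely many ideals \<open>ann\<^sub>A (m y)\<close>, \<open>m\<close> a
  monomial of length \<open>k \<ge> 1\<close>; a prime ideal that is a finite intersection of ideals equals
  one of them. Hence \<open>P = ann\<^sub>A (m y)\<close> with \<open>m\<close> homogeneous of positive degree, which gives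
  \<open>Ass Y \<subseteq> Ass X\<close> and the degree shift. Conversely, for any submodule \<open>N\<close>, if
  \<open>P = ann\<^sub>A x\<close> and some \<open>a x \<in> N\<close> is nonzero, then \<open>P = ann\<^sub>A (a x)\<close>; otherwise
  \<open>P = ann\<^sub>A (x + N)\<close>. So \<open>Ass X \<subseteq> Ass (X/N) \<union> Ass N\<close>.\<close>

interpretation ring: module "(*) :: 'a::comm_ring_1 \<Rightarrow> 'a \<Rightarrow> 'a"
  by standard (simp_all add: algebra_simps)

(* Interpreted, scale_scale reads a * (b * c) = a * b * c, which makes the simplifier loop. *)
declare ring.scale_scale [simp del]

lemma ideal_gen_eq_span: "ideal_gen T = ring.span T"
  by (simp add: ideal_gen_def ring.span_explicit)

lemma subspace_ideal_pow: "ring.subspace (ideal_pow I k)"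
  by (cases k) (simp_all add: ideal_prod_def ideal_gen_eq_span)

lemma ideal_pow_Suc_subset: "ideal_pow I (Suc k) \<subseteq> ideal_pow I k"
  unfolding ideal_pow.simps ideal_prod_def ideal_gen_eq_span
  by (rule ring.span_minimal) (auto intro: subspace_ideal_pow ring.subspace_scale[OF subspace_ideal_pow])

lemma ideal_pow_antimono: "k \<le> K \<Longrightarrow> ideal_pow I K \<subseteq> ideal_pow I k"
  by (induction K rule: dec_induct) (use ideal_pow_Suc_subset in blast)+

lemma prod_list_in_ideal_pow: "set ts \<subseteq> I \<Longrightarrow> prod_list ts \<in> ideal_pow I (length ts)"
  by (induction ts) (auto simp: ideal_prod_def ideal_gen_eq_span intro!: ring.span_base)

lemma mult_in_span_products:
  assumes "x \<in> ring.span S" "y \<in> ring.span T"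
  shows "x * y \<in> ring.span {s * t | s t. s \<in> S \<and> t \<in> T}"
proof -
  let ?C = "ring.span {s * t | s t. s \<in> S \<and> t \<in> T}"
  have left_multiplier: "ring.subspace {u. u * v \<in> ?C}" for v
  proof (rule ring.subspaceI)
    show "0 \<in> {u. u * v \<in> ?C}" using ring.span_zero by simp
    show "u + u' \<in> {u. u * v \<in> ?C}" if "u \<in> {u. u * v \<in> ?C}" "u' \<in> {u. u * v \<in> ?C}" for u u'
      using that ring.span_add by (simp add: distrib_right)
    show "c * u \<in> {u. u * v \<in> ?C}" if "u \<in> {u. u * v \<in> ?C}" for c u
      using that ring.span_scale by (simp add: mult.assoc)
  qed
  have right_multiplier: "ring.subspace {v. u * v \<in> ?C}" for u
    using left_multiplier[of u] by (simp only: mult.commute)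
  have generator_times_y: "s * y \<in> ?C" if "s \<in> S" for s
    using \<open>y \<in> ring.span T\<close> right_multiplier
    by (rule ring.span_induct) (use that in \<open>auto intro: ring.span_base\<close>)
  show ?thesis
    using \<open>x \<in> ring.span S\<close> left_multiplier by (rule ring.span_induct) (simp add: generator_times_y)
qed

lemma ideal_pow_span_subset_span_monomials:
  "ideal_pow (ring.span T) k \<subseteq> ring.span (prod_list ` {ts. set ts \<subseteq> T \<and> length ts = k})"
proof (induction k)
  case 0
  have "1 \<in> ring.span (prod_list ` {ts. set ts \<subseteq> T \<and> length ts = 0})"
    by (intro ring.span_base image_eqI[of _ _ "[]"]) auto
  then show ?case
    by (metis mult.right_neutral ring.span_scale subsetI)
next
  case (Suc k)
  let ?M = "\<lambda>k. prod_list ` {ts. set ts \<subseteq> T \<and> length ts = k}"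
  have "s * prod_list ts \<in> ?M (Suc k)" if "s \<in> T" "set ts \<subseteq> T" "length ts = k" for s ts
    using that by (intro image_eqI[of _ _ "s # ts"]) auto
  then have "ring.span {s * m | s m. s \<in> T \<and> m \<in> ?M k} \<subseteq> ring.span (?M (Suc k))"
    by (intro ring.span_mono) blast
  then have "i * j \<in> ring.span (?M (Suc k))"
    if "i \<in> ring.span T" "j \<in> ideal_pow (ring.span T) k" for i j
    using mult_in_span_products[OF that(1)] Suc.IH that(2) by blast
  then show ?case
    unfolding ideal_pow.simps ideal_prod_def ideal_gen_eq_span
    by (intro ring.span_minimal) auto
qed

lemma lin_comb_subset_span: "finite F \<Longrightarrow> lin_comb S F \<subseteq> ring.span F"
  by (auto simp: lin_comb_def ring.span_explicit)

lemma ideal_in_span: "ideal_in UNIV (ring.span T)"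
  by (simp add: ideal_in_def ring.span_zero ring.span_add ring.span_neg ring.span_scale)

lemma noetherian_span_finite_subset:
  fixes U :: "'a::comm_ring_1 set"
  assumes "noetherian_in (UNIV :: 'a set)"
  obtains T where "finite T" "T \<subseteq> U" "ring.span U = ring.span T"
proof -
  obtain F where F: "finite F" "F \<subseteq> ring.span U" "ring.span U = lin_comb UNIV F"
    using assms ideal_in_span[of U] unfolding noetherian_in_def by meson
  have "\<exists>Tf. finite Tf \<and> Tf \<subseteq> U \<and> f \<in> ring.span Tf" if "f \<in> F" for f
  proof -
    obtain Tf c where "finite Tf" "Tf \<subseteq> U" "f = (\<Sum>t\<in>Tf. c t * t)"
      using \<open>f \<in> F\<close> F(2) unfolding ring.span_explicit by blast
    then show ?thesis
      unfolding ring.span_explicit by blast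
  qed
  then obtain Tf where Tf: "\<And>f. f \<in> F \<Longrightarrow> finite (Tf f) \<and> Tf f \<subseteq> U \<and> f \<in> ring.span (Tf f)"
    by metis
  define T where "T = (\<Union>f\<in>F. Tf f)"
  have T: "finite T" "T \<subseteq> U"
    using F(1) Tf unfolding T_def by auto
  have "F \<subseteq> ring.span T"
    unfolding T_def using Tf ring.span_mono[of "Tf f" "\<Union>f\<in>F. Tf f" for f] by blast
  then have "ring.span U \<subseteq> ring.span T"
    using F(1,3) lin_comb_subset_span ring.span_minimal[OF _ ring.subspace_span] by blast
  with T ring.span_mono[OF \<open>T \<subseteq> U\<close>] show thesis
    using that by blast
qed

lemma prime_ideal_eq_finite_Inter:
  fixes A :: "'a::comm_ring_1 set"
  assumes P: "prime_ideal_in A P" and "finite Ms"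
    and A: "1 \<in> A" "\<And>x y. x \<in> A \<Longrightarrow> y \<in> A \<Longrightarrow> x * y \<in> A"
    and I: "\<And>i. i \<in> Ms \<Longrightarrow> I i \<subseteq> A" "\<And>i a x. i \<in> Ms \<Longrightarrow> a \<in> A \<Longrightarrow> x \<in> I i \<Longrightarrow> a * x \<in> I i"
    and P_eq: "P = A \<inter> (\<Inter>i\<in>Ms. I i)"
  shows "\<exists>i\<in>Ms. P = I i"
proof (rule ccontr)
  assume "\<not> (\<exists>i\<in>Ms. P = I i)"
  then have "\<exists>a. a \<in> I i \<and> a \<notin> P" if "i \<in> Ms" for i
    using that P_eq by blast
  then obtain f where f: "\<And>i. i \<in> Ms \<Longrightarrow> f i \<in> I i \<and> f i \<notin> P"
    by metis
  have P_proper: "P \<noteq> A" and P_prime: "\<And>a b. a \<in> A \<Longrightarrow> b \<in> A \<Longrightarrow> a * b \<in> P \<Longrightarrow> a \<in> P \<or> b \<in> P"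
    and P_absorb: "\<And>a x. a \<in> A \<Longrightarrow> x \<in> P \<Longrightarrow> a * x \<in> P"
    using P by (auto simp: prime_ideal_in_def ideal_in_def)
  have "1 \<notin> P"
  proof
    assume "1 \<in> P"
    then have "A \<subseteq> P"
      using P_absorb[of _ 1] by auto
    then show False
      using P_proper P_eq by blast
  qed
  then have outside: "prod f M \<in> A - P" if "M \<subseteq> Ms" for M
    using that \<open>finite Ms\<close>
  proof (induction M rule: infinite_finite_induct)
    case (insert i M)
    then have "f i \<in> A - P"
      using f I(1) by blast
    with insert show ?case
      using A(2) P_prime by auto
  qed (use A(1) in auto)
  have "prod f Ms \<in> I i" if "i \<in> Ms" for i
    using I(2)[OF that, of "prod f (Ms - {i})" "f i"] outside[of "Ms - {i}"] f[OF that]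
      prod.remove[OF \<open>finite Ms\<close> that, of f] by (auto simp: mult.commute)
  then have "prod f Ms \<in> P"
    using P_eq outside[of Ms] by blast
  then show False
    using outside[of Ms] by blast
qed

definition ideal_torsion :: "('a::comm_ring_1 \<Rightarrow> 'm::ab_group_add \<Rightarrow> 'm) \<Rightarrow> 'a set \<Rightarrow> 'm set" where
  "ideal_torsion smult I = {x. \<exists>k. \<forall>r\<in>ideal_pow I k. smult r x = 0}"

lemma H0_eq_ideal_torsion: "H0 G smult = ideal_torsion smult (irrelevant_ideal G)"
  by (simp add: H0_def ideal_torsion_def)

context module
begin

lemma annihilator_subspace: "ring.subspace {r. r *s x = 0}"
  by (rule ring.subspaceI) (simp_all add: scale_left_distrib flip: scale_scale)

lemma subspace_annihilated: "subspace {x. \<forall>r\<in>S. r *s x = 0}"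
proof (rule subspaceI)
  fix c x assume "x \<in> {x. \<forall>r\<in>S. r *s x = 0}"
  then show "c *s x \<in> {x. \<forall>r\<in>S. r *s x = 0}"
    using scale_left_commute[of _ c x] by (simp del: scale_scale)
qed (simp_all add: scale_right_distrib)

lemma lin_comb_scale_in_span:
  assumes "a \<in> lin_comb A F"
  shows "a *s y \<in> span ((\<lambda>f. f *s y) ` F)"
proof -
  obtain c where "a = (\<Sum>f\<in>F. c f * f)"
    using assms unfolding lin_comb_def by blast
  then have "a *s y = (\<Sum>f\<in>F. c f *s f *s y)"
    by (simp add: scale_sum_left)
  also have "\<dots> \<in> span ((\<lambda>f. f *s y) ` F)"
    by (intro span_sum span_scale span_base imageI)
  finally show ?thesis .
qed

lemma span_ideal_torsion_uniform_exponent: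
  assumes "finite F" "F \<subseteq> ideal_torsion scale I"
  shows "\<exists>K. \<forall>k\<ge>K. \<forall>x\<in>span F. \<forall>r\<in>ideal_pow I k. r *s x = 0"
proof -
  have "\<exists>k. \<forall>r\<in>ideal_pow I k. r *s x = 0" if "x \<in> F" for x
    using that assms(2) unfolding ideal_torsion_def by blast
  then obtain kx where kx: "\<And>x r. x \<in> F \<Longrightarrow> r \<in> ideal_pow I (kx x) \<Longrightarrow> r *s x = 0"
    by metis
  have "F \<subseteq> {x. \<forall>r\<in>ideal_pow I k. r *s x = 0}" if "sum kx F \<le> k" for k
  proof (intro subsetI CollectI ballI)
    fix x r assume "x \<in> F" "r \<in> ideal_pow I k"
    moreover have "kx x \<le> k"
      using member_le_sum[OF \<open>x \<in> F\<close> _ assms(1), of kx] that by simp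
    ultimately show "r *s x = 0"
      using kx ideal_pow_antimono by blast
  qed
  then have "span F \<subseteq> {x. \<forall>r\<in>ideal_pow I k. r *s x = 0}" if "sum kx F \<le> k" for k
    using that span_minimal subspace_annihilated by blast
  then show ?thesis
    by blast
qed

lemma ideal_pow_span_annihilates_iff:
  "(\<forall>r\<in>ideal_pow (ring.span T) k. r *s x = 0) \<longleftrightarrow>
   (\<forall>ts. set ts \<subseteq> T \<and> length ts = k \<longrightarrow> prod_list ts *s x = 0)"
proof
  assume "\<forall>r\<in>ideal_pow (ring.span T) k. r *s x = 0"
  then show "\<forall>ts. set ts \<subseteq> T \<and> length ts = k \<longrightarrow> prod_list ts *s x = 0"
    using prod_list_in_ideal_pow ring.span_superset by (metis order_trans)
next
  assume "\<forall>ts. set ts \<subseteq> T \<and> length ts = k \<longrightarrow> prod_list ts *s x = 0"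
  then have "ring.span (prod_list ` {ts. set ts \<subseteq> T \<and> length ts = k}) \<subseteq> {r. r *s x = 0}"
    by (intro ring.span_minimal annihilator_subspace) blast
  then show "\<forall>r\<in>ideal_pow (ring.span T) k. r *s x = 0"
    using ideal_pow_span_subset_span_monomials by blast
qed

lemma ass_subset_ass_quotient_Un_ass_submodule:
  assumes A: "\<And>x y. x \<in> A \<Longrightarrow> y \<in> A \<Longrightarrow> x * y \<in> A" and "0 \<in> N"
  shows "ass_quot scale A UNIV {0} \<subseteq> ass_quot scale A UNIV N \<union> ass_quot scale A N {0}"
proof
  fix P assume "P \<in> ass_quot scale A UNIV {0}"
  then obtain x where P: "prime_ideal_in A P" and P_eq: "P = {a \<in> A. a *s x = 0}"
    unfolding ass_quot_def by blast
  show "P \<in> ass_quot scale A UNIV N \<union> ass_quot scale A N {0}"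
  proof (cases "\<exists>a\<in>A. a *s x \<in> N \<and> a *s x \<noteq> 0")
    case True
    then obtain a where a: "a \<in> A" "a *s x \<in> N" "a \<notin> P"
      using P_eq by blast
    have "P = {b \<in> A. b *s a *s x = 0}"
    proof (intro equalityI subsetI)
      fix b assume "b \<in> P"
      then show "b \<in> {b \<in> A. b *s a *s x = 0}"
        using P_eq scale_left_commute[of b a x] by simp
    next
      fix b assume b: "b \<in> {b \<in> A. b *s a *s x = 0}"
      then have "b * a \<in> P"
        using P_eq A a(1) by simp
      then show "b \<in> P"
        using P a b unfolding prime_ideal_in_def by blast
    qed
    then show ?thesis
      using P a(2) unfolding ass_quot_def by blast
  next
    case False
    then have "P = {a \<in> A. a *s x \<in> N}"
      using P_eq \<open>0 \<in> N\<close> by auto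
    then show ?thesis
      using P unfolding ass_quot_def by blast
  qed
qed

lemma ann_mod_torsion_eventually_eq_ann_monomials:
  assumes "noetherian_in A" "ideal_in A P"
    and P_eq: "P = {a \<in> A. a *s y \<in> ideal_torsion scale (ring.span T)}"
  shows "\<exists>K. \<forall>k\<ge>K.
    P = {a \<in> A. \<forall>ts. set ts \<subseteq> T \<and> length ts = k \<longrightarrow> a *s prod_list ts *s y = 0}"
proof -
  obtain Pf where Pf: "finite Pf" "Pf \<subseteq> P" "P = lin_comb A Pf"
    using assms(1,2) unfolding noetherian_in_def by meson
  have "(\<lambda>p. p *s y) ` Pf \<subseteq> ideal_torsion scale (ring.span T)"
    using Pf(2) P_eq by blast
  then obtain K where K: "\<forall>k\<ge>K. \<forall>x\<in>span ((\<lambda>p. p *s y) ` Pf). \<forall>r\<in>ideal_pow (ring.span T) k. r *s x = 0"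
    using span_ideal_torsion_uniform_exponent Pf(1) by blast
  have "P = {a \<in> A. \<forall>ts. set ts \<subseteq> T \<and> length ts = k \<longrightarrow> a *s prod_list ts *s y = 0}"
    if "K \<le> k" for k
  proof (intro equalityI subsetI)
    fix a assume "a \<in> P"
    then have "\<forall>r\<in>ideal_pow (ring.span T) k. r *s a *s y = 0"
      using K that lin_comb_scale_in_span Pf(3) by blast
    with \<open>a \<in> P\<close> show "a \<in> {a \<in> A. \<forall>ts. set ts \<subseteq> T \<and> length ts = k \<longrightarrow> a *s prod_list ts *s y = 0}"
      unfolding ideal_pow_span_annihilates_iff using P_eq by (auto simp: mult.commute[of a])
  next
    fix a assume "a \<in> {a \<in> A. \<forall>ts. set ts \<subseteq> T \<and> length ts = k \<longrightarrow> a *s prod_list ts *s y = 0}"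
    then have "a \<in> A" "\<forall>r\<in>ideal_pow (ring.span T) k. r *s a *s y = 0"
      unfolding ideal_pow_span_annihilates_iff by (auto simp: mult.commute[of a])
    then show "a \<in> P"
      using P_eq unfolding ideal_torsion_def by blast
  qed
  then show ?thesis
    by blast
qed

lemma prime_ann_mod_torsion_eq_ann_monomial_multiple:
  assumes A: "1 \<in> A" "\<And>x y. x \<in> A \<Longrightarrow> y \<in> A \<Longrightarrow> x * y \<in> A" and "noetherian_in A"
    and "finite T" and P: "prime_ideal_in A P"
    and P_eq: "P = {a \<in> A. a *s y \<in> ideal_torsion scale (ring.span T)}"
  shows "\<exists>ts. set ts \<subseteq> T \<and> ts \<noteq> [] \<and> P = {a \<in> A. a *s prod_list ts *s y = 0}"
proof -
  have "ideal_in A P"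
    using P unfolding prime_ideal_in_def by blast
  then obtain K where "\<forall>k\<ge>K.
      P = {a \<in> A. \<forall>ts. set ts \<subseteq> T \<and> length ts = k \<longrightarrow> a *s prod_list ts *s y = 0}"
    using ann_mod_torsion_eventually_eq_ann_monomials[OF \<open>noetherian_in A\<close> _ P_eq] by blast
  then have K: "P = {a \<in> A. \<forall>ts. set ts \<subseteq> T \<and> length ts = Suc K \<longrightarrow> a *s prod_list ts *s y = 0}"
    by simp
  define Ms where "Ms = {ts. set ts \<subseteq> T \<and> length ts = Suc K}"
  define I where "I ts = {a \<in> A. a *s prod_list ts *s y = 0}" for ts
  have "P = A \<inter> (\<Inter>ts\<in>Ms. I ts)"
    using K unfolding Ms_def I_def by blast
  moreover have "finite Ms"
    unfolding Ms_def using finite_lists_length_eq[OF \<open>finite T\<close>] by simp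
  moreover have "I ts \<subseteq> A" for ts
    unfolding I_def by blast
  moreover have "b * a \<in> I ts" if "b \<in> A" "a \<in> I ts" for b a ts
    using that A(2) unfolding I_def by (auto simp flip: scale_scale)
  ultimately obtain ts where "ts \<in> Ms" "P = I ts"
    using prime_ideal_eq_finite_Inter[OF P _ A(1) A(2), of Ms I] by blast
  then show ?thesis
    unfolding Ms_def I_def by auto
qed

end

lemma graded_ring_degree_zero_mult_closed:
  "graded_ring G \<Longrightarrow> x \<in> G 0 \<Longrightarrow> y \<in> G 0 \<Longrightarrow> x * y \<in> G 0"
  unfolding graded_ring_def by (metis add_0)

lemma prod_list_in_positive_degree:
  assumes "graded_ring G" "set ts \<subseteq> (\<Union>n\<in>{1..}. G n)"
  shows "\<exists>d\<ge>length ts. prod_list ts \<in> G d"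
  using assms(2)
proof (induction ts)
  case Nil
  then show ?case
    using assms(1) unfolding graded_ring_def by auto
next
  case (Cons t ts)
  then obtain d e where "prod_list ts \<in> G d" "d \<ge> length ts" "t \<in> G e" "e \<ge> 1"
    by auto
  then show ?case
    using assms(1) unfolding graded_ring_def by (intro exI[of _ "e + d"]) auto
qed

lemma irrelevant_ideal_finitely_generated:
  assumes "standard_graded G"
  obtains T where "finite T" "T \<subseteq> (\<Union>n\<in>{1..}. G n)" "irrelevant_ideal G = ring.span T"
  using assms noetherian_span_finite_subset
  unfolding standard_graded_def irrelevant_ideal_def ideal_gen_eq_span by metis

lemma (in module) ass_H0_quotient_eq_ann_positive_degree_multiple:
  assumes "noetherian_in (G 0)" "standard_graded G"
    and P: "prime_ideal_in (G 0) P" and P_eq: "P = {a \<in> G 0. a *s y \<in> H0 G scale}"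
  shows "\<exists>m d. d \<ge> 1 \<and> m \<in> G d \<and> P = {a \<in> G 0. a *s m *s y = 0}"
proof -
  have graded: "graded_ring G"
    using assms(2) unfolding standard_graded_def by blast
  then have G0: "1 \<in> G 0" "\<And>x y. x \<in> G 0 \<Longrightarrow> y \<in> G 0 \<Longrightarrow> x * y \<in> G 0"
    using graded_ring_degree_zero_mult_closed unfolding graded_ring_def by blast+
  obtain T where T: "finite T" "T \<subseteq> (\<Union>n\<in>{1..}. G n)" "irrelevant_ideal G = ring.span T"
    using irrelevant_ideal_finitely_generated[OF assms(2)] .
  obtain ts where ts: "set ts \<subseteq> T" "ts \<noteq> []" "P = {a \<in> G 0. a *s prod_list ts *s y = 0}"
    using prime_ann_mod_torsion_eq_ann_monomial_multiple[OF G0 assms(1) T(1) P] P_eq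
    unfolding H0_eq_ideal_torsion T(3) by blast
  obtain d where d: "d \<ge> length ts" "prod_list ts \<in> G d"
    using prod_list_in_positive_degree[OF graded] ts(1) T(2) by blast
  with ts(2) have "d \<ge> 1"
    by (cases ts) auto
  with d(2) ts(3) show ?thesis
    by blast
qed

lemma (in module) ass_eq_ass_H0_quotient_Un_ass_H0:
  assumes "noetherian_in (G 0)" "standard_graded G"
  shows "ass_quot scale (G 0) UNIV {0}
    = ass_quot scale (G 0) UNIV (H0 G scale) \<union> ass_quot scale (G 0) (H0 G scale) {0}"
proof (rule subset_antisym)
  have "\<And>x y. x \<in> G 0 \<Longrightarrow> y \<in> G 0 \<Longrightarrow> x * y \<in> G 0"
    using assms(2) graded_ring_degree_zero_mult_closed unfolding standard_graded_def by blast
  moreover have "0 \<in> H0 G scale"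
    unfolding H0_def by simp
  ultimately show "ass_quot scale (G 0) UNIV {0}
      \<subseteq> ass_quot scale (G 0) UNIV (H0 G scale) \<union> ass_quot scale (G 0) (H0 G scale) {0}"
    by (rule ass_subset_ass_quotient_Un_ass_submodule)
  have "ass_quot scale (G 0) UNIV (H0 G scale) \<subseteq> ass_quot scale (G 0) UNIV {0}"
    using ass_H0_quotient_eq_ann_positive_degree_multiple[OF assms] unfolding ass_quot_def by blast
  moreover have "ass_quot scale (G 0) (H0 G scale) {0} \<subseteq> ass_quot scale (G 0) UNIV {0}"
    unfolding ass_quot_def by blast
  ultimately show "ass_quot scale (G 0) UNIV (H0 G scale) \<union> ass_quot scale (G 0) (H0 G scale) {0}
      \<subseteq> ass_quot scale (G 0) UNIV {0}"
    by blast
qed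

theorem proposition4p4:
  fixes G :: "nat \<Rightarrow> 'a::comm_ring_1 set"
    and smult :: "'a \<Rightarrow> 'm::ab_group_add \<Rightarrow> 'm"
    and X :: "int \<Rightarrow> 'm set"
  assumes "noetherian_in (G 0)"
    and "standard_graded G"
    and "in_starMod_f G smult X"
  shows "ass_quot smult (G 0) UNIV {0}
           = ass_quot smult (G 0) UNIV (H0 G smult) \<union> ass_quot smult (G 0) (H0 G smult) {0}
         \<and> (\<forall>s P. P \<in> ass_quot smult (G 0) (X s) (H0 G smult)
           \<longrightarrow> (\<exists>r\<ge>1. P \<in> ass_quot smult (G 0) (X (s + r)) {0}))"
proof -
  have X: "graded_module G smult X"
    using assms(3) unfolding in_starMod_f_def by blast
  then interpret module smult
    unfolding graded_module_def by blast
  have "\<exists>r\<ge>1. P \<in> ass_quot smult (G 0) (X (s + r)) {0}"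
    if P: "P \<in> ass_quot smult (G 0) (X s) (H0 G smult)" for s P
  proof -
    obtain y where y: "y \<in> X s" "prime_ideal_in (G 0) P" "P = {a \<in> G 0. smult a y \<in> H0 G smult}"
      using P unfolding ass_quot_def by blast
    then obtain m d where "d \<ge> 1" "m \<in> G d" "P = {a \<in> G 0. smult a (smult m y) = 0}"
      using ass_H0_quotient_eq_ann_positive_degree_multiple[OF assms(1,2)] by blast
    moreover have "smult m y \<in> X (s + int d)"
      using X y(1) \<open>m \<in> G d\<close> unfolding graded_module_def by (metis add.commute)
    ultimately have "P \<in> ass_quot smult (G 0) (X (s + int d)) {0}"
      using y(2) unfolding ass_quot_def by blast
    with \<open>d \<ge> 1\<close> show ?thesis
      by (intro exI[of _ "int d"]) simp
  qed
  with ass_eq_ass_H0_quotient_Un_ass_H0[OF assms(1,2)] show ?thesis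
    by blast
qed

end
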